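(* For $\lambda\in\mathscr{P}^n_C$, the element $x_\lambda\in W^0_{\mathrm{af}}$ lies in the set $(W^P)_{\mathrm{af}}$ of Peterson's coset representatives if and only if $\lambda_1\le n+1$. Equivariantly, under the bijection $\mathscr{P}^n_C\cong W^0_{\mathrm{af}}$, $\lambda\mapsto x_\lambda$, the subset $W^0_{\mathrm{af}}\cap(W^P)_{\mathrm{af}}$ corresponds to $\{\lambda\in\mathscr{P}^n_C:\lambda_1\le n+1\}$.
   Context: $W_{\mathrm{af}}$ is the affine Weyl group of type $C_n^{(1)}$ with generators $s_0,\dots,s_n$; $W=\langle s_1,\dots,s_n\rangle$ acts on $X^\vee=\bigoplus_{i=1}^n\mathbb{Z}\varepsilon_i$ ($s_i$ swaps $\varepsilon_i,\varepsilon_{i+1}$ for $i<n$; $s_n$ negates $\varepsilon_n$), with coroot lattice $Q^\vee$ spanned by $\varepsilon_i-\varepsilon_{i+1}$ ($i<n$) and $\varepsilon_n$; $W_{\mathrm{af}}\cong W\ltimes Q^\vee$ (elements $wt_\xi$, $wt_\xi w^{-1}=t_{w\xi}$), with $s_0=s_\theta t_{-\varepsilon_1}$, $s_\theta=s_1\cdots s_{n-1}s_ns_{n-1}\cdots s_1$. $W^0_{\mathrm{af}}$ is the set of minimal length representatives of $W_{\mathrm{af}}/W$. Let $e_1,\dots,e_n$ be the dual basis to $\varepsilon_1,\dots,\varepsilon_n$, and let $R_P^+=\{e_i-e_j:1\le i<j\le n\}$ be the positive roots of the Levi subgroup of the maximal parabolic $P$ of $\mathrm{Sp}_{2n}(\mathbb{C})$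 associated with $\alpha_n$ (i.e. with $W_P=\langle s_1,\dots,s_{n-1}\rangle$). The set $(W^P)_{\mathrm{af}}$ of Peterson's coset representatives consists of those $x=wt_\xi$ ($w\in W$, $\xi\in Q^\vee$) such that for all $\alpha\in R_P^+$: $\langle\xi,\alpha\rangle=0$ if $w(\alpha)>0$ and $\langle\xi,\alpha\rangle=-1$ if $w(\alpha)<0$. $\rho_i=s_{i-1}\cdots s_1s_0$ ($1\le i\le n$), $\rho_i=s_{2n-i+1}\cdots s_{n-1}s_ns_{n-1}\cdots s_1s_0$ ($n+1\le i\le 2n$). $\mathscr{P}^n_C$: partitions $\lambda=(\lambda_1\ge\dots\ge\lambda_l>0)$ with $\lambda_1\le2n$ and $\lambda_k<n\Rightarrow\lambda_k>\lambda_{k+1}$ (the empty partition has $\lambda_1=0$); $x_\lambda=\rho_{\lambda_l}\cdots\rho_{\lambda_1}$, giving a bijection $\mathscr{P}^n_C\to W^0_{\mathrm{af}}$. *)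

theory Defs
  imports Main
begin

text \<open>Signed indices: the vector \<open>\<epsilon>\<^sub>k\<close> for \<open>k \<in> {1..n}\<close>
  and \<open>\<epsilon>\<^sub>(\<^sub>-\<^sub>k\<^sub>) = -\<epsilon>\<^sub>k\<close>.  An element \<open>w\<close> of the finite Weyl group \<open>W\<close> of type C_n
  (signed permutations) is represented as an odd bijection \<open>int \<Rightarrow> int\<close> with
  \<open>w(\<epsilon>\<^sub>k) = \<epsilon>\<^sub>w\<^sub>(\<^sub>k\<^sub>)\<close>, equal to the identity outside \<open>{-n..-1} \<union> {1..n}\<close>.
  A coweight \<open>\<xi> = \<Sum> \<xi>\<^sub>k \<epsilon>\<^sub>k\<close> of X^vee is represented as the odd function
  \<open>int \<Rightarrow> int\<close> with value \<open>\<xi>\<^sub>k\<close> at \<open>k\<close>, \<open>-\<xi>\<^sub>k\<close> at \<open>-k\<close>, and 0 elsewhere;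
  then \<open>w \<xi> = \<xi> \<circ> w\<^sup>-\<^sup>1\<close>.  Note Q^vee = X^vee here.
  An element \<open>w t\<^sub>\<xi>\<close> of the affine Weyl group is the pair \<open>(w, \<xi>)\<close>.\<close>

type_synonym waf = "(int \<Rightarrow> int) \<times> (int \<Rightarrow> int)"

text \<open>Product: \<open>(w t\<^sub>\<xi>)(v t\<^sub>\<eta>) = w v t\<^sub>v\<^sub>\<^sup>-\<^sup>1\<^sub>\<xi>\<^sub>+\<^sub>\<eta>\<close>, and \<open>v\<^sup>-\<^sup>1 \<xi> = \<xi> \<circ> v\<close>.\<close>
definition waf_mult :: "waf \<Rightarrow> waf \<Rightarrow> waf" where
  "waf_mult x y = (fst x \<circ> fst y, \<lambda>k. snd x (fst y k) + snd y k)"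

definition waf_one :: waf where
  "waf_one = (id, \<lambda>_. 0)"

definition waf_prod :: "waf list \<Rightarrow> waf" where
  "waf_prod xs = foldr waf_mult xs waf_one"

definition sref :: "nat \<Rightarrow> nat \<Rightarrow> int \<Rightarrow> int" where
  "sref n i k =
    (if 1 \<le> i \<and> i < n then
       (if k = int i then int i + 1 else if k = int i + 1 then int i
        else if k = - int i then - int i - 1 else if k = - int i - 1 then - int i else k)
     else if i = n then (if k = int n \<or> k = - int n then - k else k)
     else k)"

definition s_theta :: "nat \<Rightarrow> int \<Rightarrow> int" where
  "s_theta n = foldr (\<circ>) (map (sref n) ([1..<n] @ [n] @ rev [1..<n])) id"

definition eps1 :: "int \<Rightarrow> int" where
  "eps1 k = (if k = 1 then 1 else if k = -1 then -1 else 0)"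

definition gen :: "nat \<Rightarrow> nat \<Rightarrow> waf" where
  "gen n i = (if i = 0 then (s_theta n, \<lambda>k. - eps1 k) else (sref n i, \<lambda>_. 0))"

definition rho :: "nat \<Rightarrow> nat \<Rightarrow> waf" where
  "rho n i = waf_prod (map (gen n)
     (if i \<le> n then rev [0..<i] else [2*n - i + 1..<n+1] @ rev [0..<n]))"

definition PC :: "nat \<Rightarrow> nat list set" where
  "PC n = {lam. sorted_wrt (\<ge>) lam \<and> (\<forall>p\<in>set lam. 0 < p \<and> p \<le> 2*n)
             \<and> (\<forall>k. Suc k < length lam \<longrightarrow> lam ! k \<le> n \<longrightarrow> lam ! k > lam ! Suc k)}"

definition lam1 :: "nat list \<Rightarrow> nat" where
  "lam1 lam = (case lam of [] \<Rightarrow> 0 | a # _ \<Rightarrow> a)"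

definition x_lam :: "nat \<Rightarrow> nat list \<Rightarrow> waf" where
  "x_lam n lam = waf_prod (map (rho n) (rev lam))"

text \<open>Coefficient of \<open>e\<^sub>k\<close> (k \<ge> 1) in \<open>e\<^sub>a\<close> for a signed index a, \<open>e\<^sub>-\<^sub>a = -e\<^sub>a\<close>.
  The action on weights is \<open>w(e\<^sub>a) = e\<^sub>w\<^sub>(\<^sub>a\<^sub>)\<close>.\<close>
definition ecoef :: "int \<Rightarrow> nat \<Rightarrow> int" where
  "ecoef a k = (if a = int k then 1 else if a = - int k then -1 else 0)"

text \<open>Positivity/negativity of a weight \<open>\<Sum> c\<^sub>k e\<^sub>k\<close> w.r.t. simple roots
  \<open>e\<^sub>i - e\<^sub>i\<^sub>+\<^sub>1, 2e\<^sub>n\<close>: for roots, positive iff first nonzero coefficient positive.\<close>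
definition pos_root :: "nat \<Rightarrow> (nat \<Rightarrow> int) \<Rightarrow> bool" where
  "pos_root n c = (\<exists>k\<in>{1..n}. c k > 0 \<and> (\<forall>m\<in>{1..<k}. c m = 0))"

definition neg_root :: "nat \<Rightarrow> (nat \<Rightarrow> int) \<Rightarrow> bool" where
  "neg_root n c = (\<exists>k\<in>{1..n}. c k < 0 \<and> (\<forall>m\<in>{1..<k}. c m = 0))"

text \<open>Peterson's coset representatives \<open>(W\<^sup>P)\<^sub>a\<^sub>f\<close>, \<open>W\<^sub>P = \<langle>s\<^sub>1..s\<^sub>n\<^sub>-\<^sub>1\<rangle>\<close>,
  \<open>R\<^sub>P\<^sup>+ = {e\<^sub>i - e\<^sub>j : i<j}\<close>; \<open>\<langle>\<xi>, e\<^sub>i - e\<^sub>j\<rangle> = \<xi>\<^sub>i - \<xi>\<^sub>j\<close>.\<close>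
definition WPaf :: "nat \<Rightarrow> waf set" where
  "WPaf n = {(w, \<xi>). \<forall>i j. 1 \<le> i \<longrightarrow> i < j \<longrightarrow> j \<le> n \<longrightarrow>
      (let c = (\<lambda>k. ecoef (w (int i)) k - ecoef (w (int j)) k) in
        (pos_root n c \<longrightarrow> \<xi> (int i) - \<xi> (int j) = 0) \<and>
        (neg_root n c \<longrightarrow> \<xi> (int i) - \<xi> (int j) = -1))}"

end

theory Submission
  imports Defs
begin

text \<open>Encode \<open>x = w t\<^sub>\<xi>\<close> by its window \<open>k \<mapsto> 2n \<xi>\<^sub>k + r(w(k))\<close>, \<open>k = 1..n\<close>, where \<open>r\<close>
  numbers the signed indices \<open>1, \<dots>, n, -n, \<dots>, -1\<close> by \<open>1, \<dots>, 2n\<close>; in this order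
  \<open>e\<^sub>a - e\<^sub>b\<close> is a positive root iff \<open>a\<close> precedes \<open>b\<close>. The condition defining
  \<open>(W\<^sup>P)\<^sub>a\<^sub>f\<close> on a pair \<open>i < j\<close> then says exactly that the window entry at \<open>j\<close> exceeds
  the one at \<open>i\<close> by less than \<open>2n\<close>, so \<open>x \<in> (W\<^sup>P)\<^sub>a\<^sub>f\<close> iff its window is strictly
  increasing with spread below \<open>2n\<close>. With \<open>m = min(a, 2n + 1 - a)\<close>, right multiplication
  by \<open>\<rho>\<^sub>a\<close> moves the window entries \<open>1, \<dots>, m - 1\<close> one place to the right and puts a
  reflection of entry \<open>m\<close> in front. Building \<open>x\<^sub>\<lambda> = \<rho>\<^sub>\<lambda>\<^sub>l \<cdots> \<rho>\<^sub>\<lambda>\<^sub>1\<close> from the smallest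
  part: while the parts are at most \<open>n\<close> the window stays inside \<open>[1 - \<lambda>\<^sub>1, n]\<close>; parts
  equal to \<open>n + 1\<close> preserve increase and spread below \<open>2n\<close>; a last part
  \<open>\<lambda>\<^sub>1 \<ge> n + 2\<close> leaves the maximal entry at position \<open>n\<close> and pushes the spread
  above \<open>2n\<close>.\<close>

lemma strict_mono_on_int_intervalI:
  fixes P :: "int \<Rightarrow> 'a::order"
  assumes succ_less: "\<And>k. a \<le> k \<Longrightarrow> k < b \<Longrightarrow> P k < P (k + 1)"
  shows "strict_mono_on {a..b} P"
proof (rule strict_mono_onI)
  fix r s assume "r \<in> {a..b}" "s \<in> {a..b}" "r < s"
  then have "r + 1 \<le> s" "a \<le> r" "s \<le> b"
    by auto
  then show "P r < P s"
  proof (induction s rule: int_ge_induct)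
    case base
    then show ?case using succ_less by simp
  next
    case (step s)
    then show ?case
      using succ_less[of s] less_trans by fastforce
  qed
qed

lemma mult_add_bounds_imp_eq_0:
  fixes N d e :: int
  assumes "0 < e" "e < N" "0 < N * d + e" "N * d + e < N"
  shows "d = 0"
proof -
  have "0 < N" "N * d < N * 1" "0 < N * (d + 1)"
    using assms unfolding distrib_left mult_1_right by linarith+
  then have "d < 1" "0 < d + 1"
    by (simp_all only: mult_less_cancel_left_pos zero_less_mult_pos)
  then show ?thesis
    by simp
qed

lemma waf_mult_assoc: "waf_mult (waf_mult x y) z = waf_mult x (waf_mult y z)"
  by (simp add: waf_mult_def comp_def add.assoc)

lemma waf_mult_one_left [simp]: "waf_mult waf_one x = x"
  by (simp add: waf_mult_def waf_one_def)

lemma waf_mult_one_right [simp]: "waf_mult x waf_one = x"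
  by (simp add: waf_mult_def waf_one_def)

lemma waf_prod_snoc: "waf_prod (xs @ [y]) = waf_mult (waf_prod xs) y"
  by (induction xs) (simp_all add: waf_prod_def waf_mult_assoc)

lemma x_lam_Nil: "x_lam n [] = waf_one"
  by (simp add: x_lam_def waf_prod_def)

lemma x_lam_Cons: "x_lam n (a # lam) = waf_mult (x_lam n lam) (rho n a)"
  by (simp add: x_lam_def waf_prod_snoc)

definition odd_fun :: "(int \<Rightarrow> int) \<Rightarrow> bool" where
  "odd_fun f \<longleftrightarrow> (\<forall>k. f (- k) = - f k)"

definition sref_word :: "nat \<Rightarrow> nat list \<Rightarrow> int \<Rightarrow> int" where
  "sref_word n ws = foldr (\<circ>) (map (sref n) ws) id"

lemma sref_word_Nil [simp]: "sref_word n [] = id"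
  by (simp add: sref_word_def)

lemma sref_word_Cons [simp]: "sref_word n (i # ws) = sref n i \<circ> sref_word n ws"
  by (simp add: sref_word_def)

lemma sref_word_append: "sref_word n (ws @ vs) = sref_word n ws \<circ> sref_word n vs"
  by (induction ws) (simp_all add: comp_assoc)

lemma sref_involution: "sref n i (sref n i k) = k"
  by (auto simp: sref_def)

lemma inj_sref_word: "inj (sref_word n ws)"
proof (induction ws)
  case (Cons i ws)
  have "inj (sref n i)"
    by (metis injI sref_involution)
  with Cons show ?case
    using inj_compose sref_word_Cons by metis
qed simp

lemma odd_fun_sref_word: "odd_fun (sref_word n ws)"
  by (induction ws) (auto simp: odd_fun_def sref_def)

lemma sref_word_descending:
  assumes "1 \<le> j" "j \<le> n"
  shows "sref_word n (rev [1..<j]) = (\<lambda>k.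
    if k = 1 then int j else if k = -1 then - int j
    else if 2 \<le> k \<and> k \<le> int j then k - 1 else if - int j \<le> k \<and> k \<le> -2 then k + 1 else k)"
  using assms
proof (induction j rule: nat_induct_at_least)
  case (Suc j)
  then have "sref_word n (rev [1..<Suc j]) = sref n j \<circ> sref_word n (rev [1..<j])"
    by (simp add: sref_word_append)
  with Suc show ?case
    by (auto simp: sref_def fun_eq_iff)
qed (auto simp: fun_eq_iff)

lemma sref_word_ascending:
  assumes "1 \<le> j" "j \<le> n"
  shows "sref_word n [1..<j] = (\<lambda>k.
    if k = int j then 1 else if k = - int j then -1
    else if 1 \<le> k \<and> k < int j then k + 1 else if - int j < k \<and> k \<le> -1 then k - 1 else k)"
  using assms
proof (induction j rule: nat_induct_at_least)
  case (Suc j)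
  then have "sref_word n [1..<Suc j] = sref_word n [1..<j] \<circ> sref n j"
    by (simp add: sref_word_append)
  with Suc show ?case
    by (auto simp: sref_def fun_eq_iff)
qed (auto simp: fun_eq_iff)

lemma sref_word_to_last:
  assumes "1 \<le> m" "m \<le> n"
  shows "sref_word n [m..<n+1] = (\<lambda>k.
    if k = int n then - int m else if k = - int n then int m
    else if int m \<le> k \<and> k < int n then k + 1 else if - int n < k \<and> k \<le> - int m then k - 1 else k)"
  using assms
proof (induction "n - m" arbitrary: m)
  case 0
  then have "[m..<n+1] = [n]" "m = n" by simp_all
  then show ?case
    by (auto simp: sref_def fun_eq_iff)
next
  case (Suc d)
  have "[m..<n+1] = m # [Suc m..<n+1]"
    using Suc.prems by (simp add: upt_conv_Cons)
  then have "sref_word n [m..<n+1] = sref n m \<circ> sref_word n [Suc m..<n+1]"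
    by (simp only: sref_word_Cons)
  with Suc show ?case
    using Suc.hyps(1)[of "Suc m"] by (auto simp: sref_def fun_eq_iff)
qed

lemma s_theta_sref_word: "s_theta n = sref_word n ([1..<n] @ [n] @ rev [1..<n])"
  by (simp add: s_theta_def sref_word_def)

lemma s_theta_eq:
  assumes "1 \<le> n"
  shows "s_theta n = (\<lambda>k. if k = 1 then -1 else if k = -1 then 1 else k)"
proof -
  have "s_theta n = sref_word n [1..<n] \<circ> sref n n \<circ> sref_word n (rev [1..<n])"
    unfolding s_theta_def sref_word_def[symmetric] sref_word_append by (simp add: comp_assoc)
  with assms show ?thesis
    unfolding sref_word_ascending[OF assms order_refl] sref_word_descending[OF assms order_refl]
    by (auto simp: sref_def fun_eq_iff)
qed

definition rho_word :: "nat \<Rightarrow> nat \<Rightarrow> nat list" where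
  "rho_word n a = (if a \<le> n then rev [1..<a] else [2*n - a + 1..<n+1] @ rev [1..<n])"

lemma waf_prod_gen_word:
  "0 \<notin> set ws \<Longrightarrow> waf_prod (map (gen n) ws @ [gen n 0]) = (sref_word n ws \<circ> s_theta n, \<lambda>k. - eps1 k)"
  by (induction ws) (auto simp: waf_prod_def waf_mult_def waf_one_def gen_def)

lemma rho_eq:
  assumes "1 \<le> a" "a \<le> 2*n"
  shows "rho n a = (sref_word n (rho_word n a) \<circ> s_theta n, \<lambda>k. - eps1 k)"
proof -
  have "(if a \<le> n then rev [0..<a] else [2*n - a + 1..<n+1] @ rev [0..<n]) = rho_word n a @ [0]"
    using assms by (auto simp: rho_word_def upt_conv_Cons)
  moreover have "0 \<notin> set (rho_word n a)"
    by (simp add: rho_word_def)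
  ultimately show ?thesis
    by (simp add: rho_def waf_prod_gen_word)
qed

lemma rho_apply_le:
  assumes "1 \<le> a" "a \<le> n" "1 \<le> k" "k \<le> int n"
  shows "fst (rho n a) k = (if k = 1 then - int a else if k \<le> int a then k - 1 else k)"
proof -
  have "fst (rho n a) = sref_word n (rev [1..<a]) \<circ> s_theta n"
    using assms rho_eq[of a n] by (simp add: rho_word_def)
  with assms show ?thesis
    unfolding sref_word_descending[OF assms(1,2)] s_theta_eq[OF order_trans[OF assms(1,2)]]
    by simp
qed

lemma rho_apply_gt:
  assumes "n < a" "a \<le> 2*n" "1 \<le> k" "k \<le> int n"
  shows "fst (rho n a) k =
    (if k = 1 then int (2*n - a + 1) else if k \<le> int (2*n - a + 1) then k - 1 else k)"
proof -
  have n: "1 \<le> n" "n \<le> n" and m: "1 \<le> 2*n - a + 1" "2*n - a + 1 \<le> n"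
    using assms by auto
  have "fst (rho n a) = sref_word n [2*n - a + 1..<n+1] \<circ> sref_word n (rev [1..<n]) \<circ> s_theta n"
    using assms rho_eq[of a n] by (simp add: rho_word_def sref_word_append)
  with assms show ?thesis
    unfolding sref_word_to_last[OF m] sref_word_descending[OF n] s_theta_eq[OF n(1)]
    by simp
qed

lemma snd_rho: "1 \<le> a \<Longrightarrow> a \<le> 2*n \<Longrightarrow> snd (rho n a) = (\<lambda>k. - eps1 k)"
  by (simp add: rho_eq)

definition signed_perm :: "nat \<Rightarrow> (int \<Rightarrow> int) \<Rightarrow> bool" where
  "signed_perm n w \<longleftrightarrow> inj w \<and> odd_fun w \<and> (\<forall>k. 1 \<le> k \<and> k \<le> int n \<longrightarrow> w k \<noteq> 0 \<and> \<bar>w k\<bar> \<le> int n)"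

lemma signed_perm_id: "signed_perm n id"
  by (simp add: signed_perm_def odd_fun_def)

lemma signed_perm_comp:
  assumes w: "signed_perm n w" and v: "signed_perm n v"
  shows "signed_perm n (w \<circ> v)"
proof -
  have "w (v k) \<noteq> 0 \<and> \<bar>w (v k)\<bar> \<le> int n" if "1 \<le> k" "k \<le> int n" for k
  proof (cases "v k > 0")
    case True
    with that v w show ?thesis by (auto simp: signed_perm_def)
  next
    case False
    with that v have "1 \<le> - v k" "- v k \<le> int n" by (auto simp: signed_perm_def)
    moreover have "w (v k) = - w (- v k)"
      using w unfolding signed_perm_def odd_fun_def by (metis minus_minus)
    ultimately show ?thesis
      using w by (auto simp: signed_perm_def)
  qed
  with w v show ?thesis
    by (auto simp: signed_perm_def odd_fun_def inj_compose)
qed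

lemma signed_perm_rho:
  assumes "1 \<le> a" "a \<le> 2*n"
  shows "signed_perm n (fst (rho n a))"
proof -
  have "fst (rho n a) = sref_word n (rho_word n a @ [1..<n] @ [n] @ rev [1..<n])"
    using assms by (simp add: rho_eq s_theta_sref_word sref_word_append)
  then have "inj (fst (rho n a)) \<and> odd_fun (fst (rho n a))"
    by (simp add: inj_sref_word odd_fun_sref_word)
  moreover have "fst (rho n a) k \<noteq> 0 \<and> \<bar>fst (rho n a) k\<bar> \<le> int n" if "1 \<le> k" "k \<le> int n" for k
    using assms that by (cases "a \<le> n") (auto simp: rho_apply_le rho_apply_gt)
  ultimately show ?thesis
    by (simp add: signed_perm_def)
qed

definition signed_rank :: "nat \<Rightarrow> int \<Rightarrow> int" where
  "signed_rank n a = (if 0 < a then a else 2 * int n + 1 + a)"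

definition window :: "nat \<Rightarrow> waf \<Rightarrow> int \<Rightarrow> int" where
  "window n x k = 2 * int n * snd x k + signed_rank n (fst x k)"

definition admissible :: "nat \<Rightarrow> waf \<Rightarrow> bool" where
  "admissible n x \<longleftrightarrow> signed_perm n (fst x) \<and> odd_fun (snd x)"

lemma signed_rank_bounds: "a \<noteq> 0 \<Longrightarrow> \<bar>a\<bar> \<le> int n \<Longrightarrow> 1 \<le> signed_rank n a \<and> signed_rank n a \<le> 2 * int n"
  by (auto simp: signed_rank_def)

lemma signed_rank_inject:
  "a \<noteq> 0 \<Longrightarrow> \<bar>a\<bar> \<le> int n \<Longrightarrow> b \<noteq> 0 \<Longrightarrow> \<bar>b\<bar> \<le> int n \<Longrightarrow> signed_rank n a = signed_rank n b \<longleftrightarrow> a = b"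
  by (auto simp: signed_rank_def)

lemma admissible_one: "admissible n waf_one"
  by (simp add: admissible_def waf_one_def signed_perm_id odd_fun_def)

lemma admissible_mult_rho:
  assumes "admissible n x" "1 \<le> a" "a \<le> 2*n"
  shows "admissible n (waf_mult x (rho n a))"
proof -
  have "odd_fun (\<lambda>k. snd x (fst (rho n a) k) - eps1 k)"
    using assms signed_perm_rho[of a n]
    by (simp add: admissible_def signed_perm_def odd_fun_def eps1_def)
  with assms show ?thesis
    by (simp add: admissible_def waf_mult_def snd_rho signed_perm_comp signed_perm_rho)
qed

lemma window_mult_rho:
  assumes x: "admissible n x" and "1 \<le> a" "a \<le> 2*n" and v: "fst (rho n a) k = v" "v \<noteq> 0" "\<bar>v\<bar> \<le> int n"
  shows "window n (waf_mult x (rho n a)) k =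
    (if 0 < v then window n x v else 2 * int n + 1 - window n x (- v)) - 2 * int n * eps1 k"
proof (cases "0 < v")
  case False
  then have "1 \<le> - v" "- v \<le> int n" using v by auto
  then have "fst x (- v) \<noteq> 0" using x by (simp add: admissible_def signed_perm_def)
  moreover have "fst x v = - fst x (- v)" "snd x v = - snd x (- v)"
    using x unfolding admissible_def signed_perm_def odd_fun_def by (metis minus_minus)+
  ultimately show ?thesis
    using assms False by (auto simp: window_def waf_mult_def snd_rho signed_rank_def algebra_simps)
qed (use assms in \<open>simp add: window_def waf_mult_def snd_rho algebra_simps\<close>)

lemma window_mult_rho_le:
  assumes "admissible n x" "1 \<le> a" "a \<le> n" "1 \<le> k" "k \<le> int n"
  shows "window n (waf_mult x (rho n a)) k =
    (if k = 1 then 1 - window n x (int a) else if k \<le> int a then window n x (k - 1) else window n x k)"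
  using assms window_mult_rho[OF assms(1,2) _ rho_apply_le[OF assms(2-5)]]
  by (auto simp: eps1_def)

lemma window_mult_rho_gt:
  assumes "admissible n x" "n < a" "a \<le> 2*n" "1 \<le> k" "k \<le> int n"
  shows "window n (waf_mult x (rho n a)) k =
    (if k = 1 then window n x (int (2*n - a + 1)) - 2 * int n
     else if k \<le> int (2*n - a + 1) then window n x (k - 1) else window n x k)"
  using assms window_mult_rho[OF assms(1) _ assms(3) rho_apply_gt[OF assms(2-5)]]
  by (auto simp: eps1_def)

lemma neg_root_iff_pos_root_uminus: "neg_root n c \<longleftrightarrow> pos_root n (\<lambda>k. - c k)"
  by (simp add: neg_root_def pos_root_def)

lemma not_pos_root_and_neg_root: "\<not> (pos_root n c \<and> neg_root n c)"
proof
  assume "pos_root n c \<and> neg_root n c"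
  then obtain k l where "k \<in> {1..n}" "c k > 0" "\<forall>m\<in>{1..<k}. c m = 0"
    and "l \<in> {1..n}" "c l < 0" "\<forall>m\<in>{1..<l}. c m = 0"
    by (auto simp: pos_root_def neg_root_def)
  then show False
    by (cases k l rule: linorder_cases) auto
qed

lemma pos_root_ecoef_diff:
  assumes "a \<noteq> 0" "\<bar>a\<bar> \<le> int n" "b \<noteq> 0" "\<bar>b\<bar> \<le> int n" "signed_rank n a < signed_rank n b"
  shows "pos_root n (\<lambda>k. ecoef a k - ecoef b k)"
  unfolding pos_root_def
proof
  let ?k = "nat (min \<bar>a\<bar> \<bar>b\<bar>)"
  show "?k \<in> {1..n}"
    using assms by auto
  show "ecoef a ?k - ecoef b ?k > 0 \<and> (\<forall>m\<in>{1..<?k}. ecoef a m - ecoef b m = 0)"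
    using assms by (auto simp: ecoef_def signed_rank_def split: if_splits)
qed

lemma peterson_pair_iff:
  fixes u v :: int
  assumes a: "a \<noteq> 0" "\<bar>a\<bar> \<le> int n" and b: "b \<noteq> 0" "\<bar>b\<bar> \<le> int n" and "a \<noteq> b"
  defines "c \<equiv> \<lambda>k. ecoef a k - ecoef b k"
    and "D \<equiv> (2 * int n * v + signed_rank n b) - (2 * int n * u + signed_rank n a)"
  shows "((pos_root n c \<longrightarrow> u - v = 0) \<and> (neg_root n c \<longrightarrow> u - v = -1)) \<longleftrightarrow> 0 < D \<and> D < 2 * int n"
proof -
  have "signed_rank n a \<noteq> signed_rank n b"
    using signed_rank_inject[OF a b] \<open>a \<noteq> b\<close> by blast
  then consider (less) "signed_rank n a < signed_rank n b" | (greater) "signed_rank n b < signed_rank n a"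
    by linarith
  then show ?thesis
  proof cases
    case less
    have "pos_root n c"
      unfolding c_def using a b less by (rule pos_root_ecoef_diff)
    with not_pos_root_and_neg_root have "\<not> neg_root n c"
      by blast
    have D_eq: "D = 2 * int n * (v - u) + (signed_rank n b - signed_rank n a)"
      by (simp add: D_def algebra_simps)
    have "0 < D \<and> D < 2 * int n \<longleftrightarrow> v - u = 0"
      using D_eq less signed_rank_bounds[OF a] signed_rank_bounds[OF b]
        mult_add_bounds_imp_eq_0[of "signed_rank n b - signed_rank n a" "2 * int n" "v - u"]
      by auto
    with \<open>pos_root n c\<close> \<open>\<not> neg_root n c\<close> show ?thesis
      by auto
  next
    case greater
    have "neg_root n c"
      unfolding c_def neg_root_iff_pos_root_uminus using b a greater by (simp add: pos_root_ecoef_diff)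
    with not_pos_root_and_neg_root have "\<not> pos_root n c"
      by blast
    have D_eq: "D = 2 * int n * (v - u - 1) + (2 * int n + signed_rank n b - signed_rank n a)"
      by (simp add: D_def algebra_simps)
    have "0 < D \<and> D < 2 * int n \<longleftrightarrow> v - u - 1 = 0"
      using D_eq greater signed_rank_bounds[OF a] signed_rank_bounds[OF b]
        mult_add_bounds_imp_eq_0[of "2 * int n + signed_rank n b - signed_rank n a" "2 * int n" "v - u - 1"]
      by auto
    with \<open>neg_root n c\<close> \<open>\<not> pos_root n c\<close> show ?thesis
      by auto
  qed
qed

definition peterson_window :: "nat \<Rightarrow> (int \<Rightarrow> int) \<Rightarrow> bool" where
  "peterson_window n P \<longleftrightarrow> strict_mono_on {1..int n} P \<and> P (int n) - P 1 < 2 * int n"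

lemma peterson_window_iff_gaps:
  assumes "1 \<le> n"
  shows "peterson_window n P \<longleftrightarrow>
    (\<forall>i j. 1 \<le> i \<longrightarrow> i < j \<longrightarrow> j \<le> n \<longrightarrow>
       0 < P (int j) - P (int i) \<and> P (int j) - P (int i) < 2 * int n)"
    (is "_ \<longleftrightarrow> ?gaps")
proof
  assume "peterson_window n P"
  then have mono: "strict_mono_on {1..int n} P" and span: "P (int n) - P 1 < 2 * int n"
    by (auto simp: peterson_window_def)
  show ?gaps
  proof (intro allI impI)
    fix i j :: nat
    assume "1 \<le> i" "i < j" "j \<le> n"
    moreover from this have "P 1 \<le> P (int i)" "P (int j) \<le> P (int n)"
      using mono by (auto intro!: strict_mono_on_leD[OF mono])
    ultimately show "0 < P (int j) - P (int i) \<and> P (int j) - P (int i) < 2 * int n"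
      using span strict_mono_onD[OF mono, of "int i" "int j"] by auto
  qed
next
  assume gaps: ?gaps
  have "strict_mono_on {1..int n} P"
  proof (rule strict_mono_onI)
    fix r s assume "r \<in> {1..int n}" "s \<in> {1..int n}" "r < s"
    then show "P r < P s"
      using gaps[rule_format, of "nat r" "nat s"] by auto
  qed
  moreover have "P (int n) - P 1 < 2 * int n"
    using assms gaps[rule_format, of 1 n] by (cases "n = 1") auto
  ultimately show "peterson_window n P"
    by (simp add: peterson_window_def)
qed

lemma WPaf_iff_peterson_window:
  assumes x: "admissible n x" and n: "1 \<le> n"
  shows "x \<in> WPaf n \<longleftrightarrow> peterson_window n (window n x)"
proof -
  obtain w \<xi> where x_eq: "x = (w, \<xi>)"
    by fastforce
  have w: "inj w" "\<And>k. 1 \<le> k \<Longrightarrow> k \<le> int n \<Longrightarrow> w k \<noteq> 0 \<and> \<bar>w k\<bar> \<le> int n"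
    using x by (auto simp: x_eq admissible_def signed_perm_def)
  have pair: "(let c = (\<lambda>k. ecoef (w (int i)) k - ecoef (w (int j)) k) in
        (pos_root n c \<longrightarrow> \<xi> (int i) - \<xi> (int j) = 0) \<and> (neg_root n c \<longrightarrow> \<xi> (int i) - \<xi> (int j) = -1))
      \<longleftrightarrow> 0 < window n x (int j) - window n x (int i) \<and> window n x (int j) - window n x (int i) < 2 * int n"
    if "1 \<le> i" "i < j" "j \<le> n" for i j
  proof -
    have "w (int i) \<noteq> w (int j)"
      using that inj_eq[OF w(1)] by simp
    then show ?thesis
      unfolding Let_def window_def x_eq fst_conv snd_conv
      using that w(2)[of "int i"] w(2)[of "int j"] by (intro peterson_pair_iff) auto
  qed
  have "x \<in> WPaf n \<longleftrightarrow> (\<forall>i j. 1 \<le> i \<longrightarrow> i < j \<longrightarrow> j \<le> n \<longrightarrow>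
      (let c = (\<lambda>k. ecoef (w (int i)) k - ecoef (w (int j)) k) in
        (pos_root n c \<longrightarrow> \<xi> (int i) - \<xi> (int j) = 0) \<and> (neg_root n c \<longrightarrow> \<xi> (int i) - \<xi> (int j) = -1)))"
    unfolding WPaf_def x_eq mem_Collect_eq prod.case ..
  also have "\<dots> \<longleftrightarrow> peterson_window n (window n x)"
    unfolding peterson_window_iff_gaps[OF n] using pair by blast
  finally show ?thesis .
qed

definition short_window :: "nat \<Rightarrow> int \<Rightarrow> (int \<Rightarrow> int) \<Rightarrow> bool" where
  "short_window n c P \<longleftrightarrow> strict_mono_on {1..int n} P \<and> (\<forall>k. c < k \<and> k \<le> int n \<longrightarrow> P k = k)
     \<and> 1 - c \<le> P 1 \<and> P (int n) \<le> int n"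

definition wide_window :: "nat \<Rightarrow> (int \<Rightarrow> int) \<Rightarrow> bool" where
  "wide_window n P \<longleftrightarrow> (\<forall>k. 1 \<le> k \<and> k < int n \<longrightarrow> P k < P (int n)) \<and> 2 * int n < P (int n) - P 1"

lemma short_window_step:
  assumes P: "short_window n c P" and "0 \<le> c" "c < a" "a \<le> int n"
    and Q: "\<And>k. 1 \<le> k \<Longrightarrow> k \<le> int n \<Longrightarrow>
      Q k = (if k = 1 then 1 - P a else if k \<le> a then P (k - 1) else P k)"
  shows "short_window n a Q"
proof -
  have mono: "strict_mono_on {1..int n} P" and fixed: "\<And>k. c < k \<Longrightarrow> k \<le> int n \<Longrightarrow> P k = k"
    and low: "1 - c \<le> P 1" and high: "P (int n) \<le> int n"
    using P by (auto simp: short_window_def)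
  have Pa: "P a = a"
    using fixed assms by simp
  have "Q k < Q (k + 1)" if "1 \<le> k" "k < int n" for k
  proof -
    have "k = 1 \<or> 1 < k" "a < 2 \<or> 2 \<le> a" "k < a \<or> k = a \<or> a < k"
      using that by auto
    then consider "k = 1" "2 \<le> a" | "k = 1" "a < 2" | "1 < k" "k < a" | "1 < k" "k = a" | "1 < k" "a < k"
      by blast
    then show ?thesis
    proof cases
      case 1 then show ?thesis using Q[of 1] Q[of 2] that Pa low assms by simp
    next
      case 2 then show ?thesis using Q[of 1] Q[of 2] that Pa fixed[of 2] assms by simp
    next
      case 3 then show ?thesis using Q[of k] Q[of "k + 1"] that strict_mono_onD[OF mono, of "k - 1" k] by simp
    next
      case 4 then show ?thesis using Q[of k] Q[of "k + 1"] that strict_mono_onD[OF mono, of "k - 1" "k + 1"] by simp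
    next
      case 5 then show ?thesis using Q[of k] Q[of "k + 1"] that strict_mono_onD[OF mono, of k "k + 1"] by simp
    qed
  qed
  then have "strict_mono_on {1..int n} Q"
    by (rule strict_mono_on_int_intervalI)
  moreover have "Q (int n) \<le> int n"
  proof (cases "a < int n")
    case True
    then show ?thesis using Q[of "int n"] high assms by simp
  next
    case False
    then have "a = int n" using assms by simp
    then show ?thesis
      using Q[of "int n"] Pa assms strict_mono_onD[OF mono, of "int n - 1" "int n"] by auto
  qed
  moreover have "Q k = k" if "a < k" "k \<le> int n" for k
    using that Q[of k] fixed[of k] assms by simp
  moreover have "1 - a \<le> Q 1"
    using Q[of 1] Pa assms by simp
  ultimately show ?thesis
    by (simp add: short_window_def)
qed

lemma peterson_window_if_short_window:
  "short_window n c P \<Longrightarrow> c \<le> int n \<Longrightarrow> 1 \<le> n \<Longrightarrow> peterson_window n P"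
  by (simp add: short_window_def peterson_window_def)

lemma peterson_window_step:
  assumes P: "peterson_window n P" and "1 \<le> n"
    and Q: "\<And>k. 1 \<le> k \<Longrightarrow> k \<le> int n \<Longrightarrow> Q k = (if k = 1 then P (int n) - 2 * int n else P (k - 1))"
  shows "peterson_window n Q"
proof -
  have mono: "strict_mono_on {1..int n} P" and span: "P (int n) - P 1 < 2 * int n"
    using P by (auto simp: peterson_window_def)
  have "Q k < Q (k + 1)" if "1 \<le> k" "k < int n" for k
  proof (cases "k = 1")
    case True then show ?thesis using Q[of 1] Q[of 2] that span by simp
  next
    case False then show ?thesis using Q[of k] Q[of "k + 1"] that strict_mono_onD[OF mono, of "k - 1" k] by simp
  qed
  then have "strict_mono_on {1..int n} Q"
    by (rule strict_mono_on_int_intervalI)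
  moreover have "Q (int n) - Q 1 < 2 * int n"
  proof (cases "n = 1")
    case True then show ?thesis using Q[of 1] by simp
  next
    case False
    then show ?thesis
      using Q[of 1] Q[of "int n"] assms strict_mono_onD[OF mono, of "int n - 1" "int n"] by simp
  qed
  ultimately show ?thesis
    by (simp add: peterson_window_def)
qed

lemma wide_window_step:
  assumes top: "\<And>k. 1 \<le> k \<Longrightarrow> k < int n \<Longrightarrow> P k < P (int n)" and m: "1 \<le> m" "m < int n"
    and Q: "\<And>k. 1 \<le> k \<Longrightarrow> k \<le> int n \<Longrightarrow>
      Q k = (if k = 1 then P m - 2 * int n else if k \<le> m then P (k - 1) else P k)"
  shows "wide_window n Q"
proof -
  have Qn: "Q (int n) = P (int n)"
    using Q[of "int n"] m by simp
  have "Q k < Q (int n)" if "1 \<le> k" "k < int n" for k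
    using Q[of k] that m top[of m] top[of "k - 1"] top[of k] Qn by auto
  moreover have "2 * int n < Q (int n) - Q 1"
    using Qn Q[of 1] m top[of m] by simp
  ultimately show ?thesis
    by (simp add: wide_window_def)
qed

lemma not_peterson_window_if_wide_window: "wide_window n P \<Longrightarrow> \<not> peterson_window n P"
  by (simp add: wide_window_def peterson_window_def)

lemma PC_ConsD:
  assumes "a # lam \<in> PC n"
  shows "lam \<in> PC n" "1 \<le> a" "a \<le> 2*n" "lam1 lam \<le> a" "a \<le> n \<Longrightarrow> lam1 lam < a"
proof -
  have "lam ! Suc k < lam ! k" if "Suc k < length lam" "lam ! k \<le> n" for k
    using assms that unfolding PC_def by (auto dest!: spec[of _ "Suc k"])
  with assms show "lam \<in> PC n"
    by (auto simp: PC_def)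
  show "1 \<le> a" "a \<le> 2*n"
    using assms by (auto simp: PC_def)
  show "lam1 lam \<le> a" "a \<le> n \<Longrightarrow> lam1 lam < a"
    using assms by (cases lam; auto simp: lam1_def PC_def dest!: spec[of _ 0])+
qed

lemma admissible_x_lam: "lam \<in> PC n \<Longrightarrow> admissible n (x_lam n lam)"
proof (induction lam)
  case Nil
  then show ?case by (simp add: x_lam_Nil admissible_one)
next
  case (Cons a lam)
  then show ?case
    using PC_ConsD[OF Cons.prems] by (simp add: x_lam_Cons admissible_mult_rho)
qed

lemma window_one: "1 \<le> k \<Longrightarrow> window n waf_one k = k"
  by (simp add: window_def waf_one_def signed_rank_def)

lemma short_window_x_lam:
  "1 \<le> n \<Longrightarrow> lam \<in> PC n \<Longrightarrow> lam1 lam \<le> n \<Longrightarrow> short_window n (int (lam1 lam)) (window n (x_lam n lam))"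
proof (induction lam)
  case Nil
  then show ?case
    by (auto simp: x_lam_Nil window_one short_window_def lam1_def intro: strict_mono_onI)
next
  case (Cons a lam)
  note lam = PC_ConsD[OF Cons.prems(2)]
  have "a \<le> n"
    using Cons.prems(3) by (simp add: lam1_def)
  with lam Cons.IH Cons.prems(1) have IH: "short_window n (int (lam1 lam)) (window n (x_lam n lam))"
    by simp
  note step = window_mult_rho_le[OF admissible_x_lam[OF lam(1)] lam(2) \<open>a \<le> n\<close>]
  have "short_window n (int a) (window n (x_lam n (a # lam)))"
    unfolding x_lam_Cons by (rule short_window_step[OF IH _ _ _ step]) (use lam \<open>a \<le> n\<close> in auto)
  then show ?case
    by (simp add: lam1_def)
qed

lemma peterson_window_x_lam:
  "1 \<le> n \<Longrightarrow> lam \<in> PC n \<Longrightarrow> lam1 lam \<le> n + 1 \<Longrightarrow> peterson_window n (window n (x_lam n lam))"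
proof (induction lam)
  case Nil
  then show ?case
    using short_window_x_lam[of n "[]"] peterson_window_if_short_window by (simp add: lam1_def)
next
  case (Cons a lam)
  note lam = PC_ConsD[OF Cons.prems(2)]
  show ?case
  proof (cases "a \<le> n")
    case True
    then show ?thesis
      using short_window_x_lam[OF Cons.prems(1,2)] peterson_window_if_short_window Cons.prems(1)
      by (simp add: lam1_def)
  next
    case False
    with Cons.prems(3) have "a = n + 1"
      by (simp add: lam1_def)
    with lam Cons.IH Cons.prems(1) have IH: "peterson_window n (window n (x_lam n lam))"
      by simp
    have "n < a" "2*n - a + 1 = n"
      using \<open>a = n + 1\<close> Cons.prems(1) by simp_all
    note step = window_mult_rho_gt[OF admissible_x_lam[OF lam(1)] \<open>n < a\<close> lam(3),
      unfolded \<open>2*n - a + 1 = n\<close>]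
    show ?thesis
      unfolding x_lam_Cons by (rule peterson_window_step[OF IH Cons.prems(1)]) (simp add: step)
  qed
qed

lemma wide_window_x_lam:
  "1 \<le> n \<Longrightarrow> lam \<in> PC n \<Longrightarrow> n + 2 \<le> lam1 lam \<Longrightarrow> wide_window n (window n (x_lam n lam))"
proof (induction lam)
  case Nil
  then show ?case by (simp add: lam1_def)
next
  case (Cons a lam)
  note lam = PC_ConsD[OF Cons.prems(2)]
  have a: "n + 2 \<le> a"
    using Cons.prems(3) by (simp add: lam1_def)
  have top: "window n (x_lam n lam) k < window n (x_lam n lam) (int n)" if "1 \<le> k" "k < int n" for k
  proof (cases "n + 2 \<le> lam1 lam")
    case True
    with Cons.IH Cons.prems(1) lam(1) that show ?thesis
      by (simp add: wide_window_def)
  next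
    case False
    with peterson_window_x_lam[OF Cons.prems(1) lam(1)] that show ?thesis
      by (auto simp: peterson_window_def intro: strict_mono_onD)
  qed
  have "n < a"
    using a by simp
  note step = window_mult_rho_gt[OF admissible_x_lam[OF lam(1)] \<open>n < a\<close> lam(3)]
  show ?case
    unfolding x_lam_Cons by (rule wide_window_step[OF top _ _ step]) (use a lam(3) in auto)
qed

theorem corollary5p3:
  fixes n :: nat
  assumes "1 \<le> n"
  shows "(\<forall>lam\<in>PC n. x_lam n lam \<in> WPaf n \<longleftrightarrow> lam1 lam \<le> n + 1)
       \<and> x_lam n ` PC n \<inter> WPaf n = x_lam n ` {lam \<in> PC n. lam1 lam \<le> n + 1}"
proof -
  have "x_lam n lam \<in> WPaf n \<longleftrightarrow> lam1 lam \<le> n + 1" if lam: "lam \<in> PC n" for lam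
  proof -
    have "x_lam n lam \<in> WPaf n \<longleftrightarrow> peterson_window n (window n (x_lam n lam))"
      using admissible_x_lam[OF lam] assms by (rule WPaf_iff_peterson_window)
    also have "\<dots> \<longleftrightarrow> lam1 lam \<le> n + 1"
      using peterson_window_x_lam[OF assms lam] wide_window_x_lam[OF assms lam]
        not_peterson_window_if_wide_window
      by (cases "lam1 lam \<le> n + 1") auto
    finally show ?thesis .
  qed
  then show ?thesis
    by blast
qed

end
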